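(* Let $1\le l\le g$. The power series $Q^l(x_2,\dots,x_{n-1})$ has coefficients in $\mathbb Z_p^n$ and converges uniformly on $D_{0,1}^{n-2}=(p\mathbb Z_p)^{n-2}$, and the sequence of polynomial functions $Q^{l,s}(x_2,\dots,x_{n-1})$, $s=1,2,\dots$, converges uniformly on $D_{0,1}^{n-2}$ to $Q^l(x_2,\dots,x_{n-1})$.
   Context: Let $p$ be an odd prime, $g\ge1$, $n=2g+1$, $p>n$. $\mathbb Z_p$, $\mathbb Q_p$, $|\cdot|_p$ as usual; $D_{0,1}=\{t\in\mathbb Z_p:|t|_p<1\}$; uniform convergence on $S$ means convergence in $\sup_{S}|\cdot|_p$ (coordinatewise). Binomials $\binom{y}{k}=y(y-1)\cdots(y-k+1)/k!$. Fix $1\le l\le g$. For $a=(a_1,\dots,a_{n-1})$ write $X(a)=\prod_{i=2}^{n-2l}x_i^{a_{i-1}}\prod_{i=n-2l+1}^{n-1}x_i^{a_i}$. For a parameter $\mu$ define $Q^{l}[\mu]=(Q_1,\dots,Q_n)$ by: for $1\le j\le n-2l-1$: $Q_j=x_{j+1}\sum\binom{\mu-1}{a_j}\prod_{i\ne j}\binom{\mu}{a_i}X(a)$ over $a$ with $a_1+\dots+a_{n-2l}=a_{n-2l+1}+\dots+a_{n-1}+l-1$; for $j=n-2l$: $Q_j=\sum\binom{\mu-1}{a_j}\prod_{i\ne j}\binom{\mu}{a_i}X(a)$ with the same condition ($l-1$); for $n-2l<j\le n-1$: $Q_j=\sum\binom{\mu-1}{a_j}\prod_{i\ne j}\binom{\mu}{a_i}X(a)$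 over $a$ with $a_1+\dots+a_{n-2l}=a_{n-2l+1}+\dots+a_{n-1}+l$; $Q_n=\sum\prod_{i=1}^{n-1}\binom{\mu}{a_i}X(a)$ over $a$ with $a_1+\dots+a_{n-2l}=a_{n-2l+1}+\dots+a_{n-1}+l$. Here $\prod_{i\ne j}$ is over $i\in\{1,\dots,n-1\}\setminus\{j\}$. Then $Q^l$ is the formal power series $Q^l[-\tfrac12]$ in $x_2,\dots,x_{n-1}$ (sum over all $a\in\mathbb Z_{\ge0}^{n-1}$), and $Q^{l,s}$ is the polynomial $Q^l[\tfrac{p^s-1}2]$ (sum over $a$ with $0\le a_i\le\frac{p^s-1}2$). *)

theory Defs
  imports "HOL-Number_Theory.Number_Theory"
begin

text \<open>An element of Z_p is represented canonically by the sequence of its residues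
  modulo p^k, k = 0,1,2,...\<close>

definition Zp :: "int \<Rightarrow> (nat \<Rightarrow> int) set" where
  "Zp p = {f. \<forall>k. f k \<in> {0..<p ^ k} \<and> f (Suc k) mod p ^ k = f k}"

text \<open>Ring operations are computed levelwise (reduction mod p^k is a ring morphism).\<close>

definition padd :: "int \<Rightarrow> (nat \<Rightarrow> int) \<Rightarrow> (nat \<Rightarrow> int) \<Rightarrow> (nat \<Rightarrow> int)" where
  "padd p x y = (\<lambda>k. (x k + y k) mod p ^ k)"

definition pmul :: "int \<Rightarrow> (nat \<Rightarrow> int) \<Rightarrow> (nat \<Rightarrow> int) \<Rightarrow> (nat \<Rightarrow> int)" where
  "pmul p x y = (\<lambda>k. (x k * y k) mod p ^ k)"

definition ppow :: "int \<Rightarrow> (nat \<Rightarrow> int) \<Rightarrow> nat \<Rightarrow> (nat \<Rightarrow> int)" where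
  "ppow p x m = (\<lambda>k. (x k ^ m) mod p ^ k)"

definition psum :: "int \<Rightarrow> ('a \<Rightarrow> nat \<Rightarrow> int) \<Rightarrow> 'a set \<Rightarrow> (nat \<Rightarrow> int)" where
  "psum p f A = (\<lambda>k. (\<Sum>a\<in>A. f a k) mod p ^ k)"

definition pprod :: "int \<Rightarrow> ('a \<Rightarrow> nat \<Rightarrow> int) \<Rightarrow> 'a set \<Rightarrow> (nat \<Rightarrow> int)" where
  "pprod p f A = (\<lambda>k. (\<Prod>a\<in>A. f a k) mod p ^ k)"

definition pint :: "int \<Rightarrow> int \<Rightarrow> (nat \<Rightarrow> int)" where
  "pint p m = (\<lambda>k. m mod p ^ k)"

definition p_integral :: "int \<Rightarrow> rat \<Rightarrow> bool" where
  "p_integral p r \<longleftrightarrow> \<not> p dvd snd (quotient_of r)"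

definition prat :: "int \<Rightarrow> rat \<Rightarrow> (nat \<Rightarrow> int)" where
  "prat p r = (\<lambda>k. SOME y. y \<in> {0..<p ^ k} \<and>
      [y * snd (quotient_of r) = fst (quotient_of r)] (mod p ^ k))"

definition pdist :: "int \<Rightarrow> (nat \<Rightarrow> int) \<Rightarrow> (nat \<Rightarrow> int) \<Rightarrow> real" where
  "pdist p x y = (if x = y then 0
      else inverse (real_of_int p ^ (LEAST k. x (Suc k) \<noteq> y (Suc k))))"

definition pabs :: "int \<Rightarrow> (nat \<Rightarrow> int) \<Rightarrow> real" where
  "pabs p x = pdist p x (pint p 0)"

definition Dpoly :: "int \<Rightarrow> nat \<Rightarrow> (nat \<Rightarrow> nat \<Rightarrow> int) set" where
  "Dpoly p n = {x. \<forall>i\<in>{2..n-1}. x i \<in> Zp p \<and> pabs p (x i) < 1}"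

definition Idx :: "nat \<Rightarrow> (nat \<Rightarrow> nat) set" where
  "Idx n = {a. \<forall>i. i \<notin> {1..n-1} \<longrightarrow> a i = 0}"

definition IdxB :: "nat \<Rightarrow> nat \<Rightarrow> (nat \<Rightarrow> nat) set" where
  "IdxB n M = {a \<in> Idx n. \<forall>i. a i \<le> M}"

definition Qcond :: "nat \<Rightarrow> nat \<Rightarrow> nat \<Rightarrow> (nat \<Rightarrow> nat) \<Rightarrow> bool" where
  "Qcond n l j a \<longleftrightarrow>
     (\<Sum>i=1..n-2*l. a i) = (\<Sum>i=n-2*l+1..n-1. a i) + (if j \<le> n - 2*l then l - 1 else l)"

definition Qcoef :: "nat \<Rightarrow> nat \<Rightarrow> rat \<Rightarrow> nat \<Rightarrow> (nat \<Rightarrow> nat) \<Rightarrow> rat" where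
  "Qcoef n l \<mu> j a = (if Qcond n l j a then
      (if j \<le> n - 1 then ((\<mu> - 1) gchoose a j) * (\<Prod>i\<in>{1..n-1} - {j}. \<mu> gchoose a i)
       else (\<Prod>i\<in>{1..n-1}. \<mu> gchoose a i))
    else 0)"

definition Qexp :: "nat \<Rightarrow> nat \<Rightarrow> nat \<Rightarrow> (nat \<Rightarrow> nat) \<Rightarrow> nat \<Rightarrow> nat" where
  "Qexp n l j a i =
     (if 2 \<le> i \<and> i \<le> n - 2*l then a (i - 1)
      else if n - 2*l < i \<and> i \<le> n - 1 then a i else 0)
     + (if 1 \<le> j \<and> j + 1 \<le> n - 2*l \<and> i = j + 1 then 1 else 0)"

definition Qterm :: "int \<Rightarrow> nat \<Rightarrow> nat \<Rightarrow> rat \<Rightarrow> nat \<Rightarrow> (nat \<Rightarrow> nat \<Rightarrow> int)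
    \<Rightarrow> (nat \<Rightarrow> nat) \<Rightarrow> (nat \<Rightarrow> int)" where
  "Qterm p n l \<mu> j x a =
     pmul p (prat p (Qcoef n l \<mu> j a))
       (pprod p (\<lambda>i. ppow p (x i) (Qexp n l j a i)) {2..n-1})"

text \<open>Uniform (unconditional) convergence on D of the series sum_{a in I} T a x to F x:
  the finite partial sums converge uniformly along the net of finite subsets of I.\<close>

definition unif_series_conv :: "int \<Rightarrow> 'a set \<Rightarrow> ('a \<Rightarrow> 'b \<Rightarrow> nat \<Rightarrow> int)
    \<Rightarrow> 'b set \<Rightarrow> ('b \<Rightarrow> nat \<Rightarrow> int) \<Rightarrow> bool" where
  "unif_series_conv p I T D F \<longleftrightarrow>
     (\<forall>\<epsilon>>0. \<exists>A0. finite A0 \<and> A0 \<subseteq> I \<and>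
        (\<forall>A. finite A \<and> A0 \<subseteq> A \<and> A \<subseteq> I \<longrightarrow>
           (\<forall>x\<in>D. pdist p (psum p (\<lambda>a. T a x) A) (F x) < \<epsilon>)))"

end

theory Submission
  imports Defs
begin

text \<open>Every coefficient of \<open>Q\<^sup>l[\<mu>]\<close> is a product of binomial coefficients \<open>\<mu> choose k\<close>,
  and \<open>\<mu> \<mapsto> (\<mu> choose k)\<close> is p-adically Lipschitz on p-integral rationals:
  \<open>\<mu> \<equiv> \<mu>' mod p\<^sup>t\<^sup>+\<^sup>k\<^sup>!\<close> gives \<open>(\<mu> choose k) \<equiv> (\<mu>' choose k) mod p\<^sup>t\<close>, because dividing by
  \<open>k!\<close> loses fewer than \<open>k!\<close> factors p. Hence the coefficients of \<open>Q\<^sup>l = Q\<^sup>l[-1/2]\<close> are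
  p-integral, and as \<open>(p\<^sup>s - 1)/2 \<equiv> -1/2 mod p\<^sup>s\<close> they agree with those of \<open>Q\<^sup>l\<^sup>,\<^sup>s\<close> modulo
  \<open>p\<^sup>m\<close> once s is large. On the polydisc a monomial of degree at least m vanishes modulo
  \<open>p\<^sup>m\<close>, and the summation condition leaves only finitely many multi-indices of smaller
  degree. So modulo each \<open>p\<^sup>m\<close> the series and the polynomials \<open>Q\<^sup>l\<^sup>,\<^sup>s\<close> (s large) reduce to
  the same finite sum, which defines the limit levelwise.\<close>

section \<open>p-adic valuations of rationals\<close>

definition pval_ge :: "int \<Rightarrow> nat \<Rightarrow> rat \<Rightarrow> bool" where
  "pval_ge p s r \<longleftrightarrow> (\<exists>a b. \<not> p dvd b \<and> r = of_int (p^s * a) / of_int b)"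

lemma pval_geI: "\<not> p dvd b \<Longrightarrow> r = of_int (p^s * a) / of_int b \<Longrightarrow> pval_ge p s r"
  unfolding pval_ge_def by blast

lemma pval_geE:
  assumes "pval_ge p s r"
  obtains a b where "\<not> p dvd b" "r = of_int (p^s * a) / of_int b"
  using assms unfolding pval_ge_def by blast

lemma pval_ge_of_int [simp]: "prime p \<Longrightarrow> pval_ge p 0 (of_int z)"
  by (rule pval_geI[of p 1]) (auto simp: not_prime_unit)

lemma pval_ge_of_nat [simp]: "prime p \<Longrightarrow> pval_ge p 0 (of_nat z)"
  using pval_ge_of_int[of p "int z"] by simp

lemma pval_ge_zero [simp]: "prime p \<Longrightarrow> pval_ge p s 0"
  by (rule pval_geI[of p 1 _ _ 0]) (auto simp: not_prime_unit)

lemma pval_ge_mono: "t \<le> s \<Longrightarrow> pval_ge p s r \<Longrightarrow> pval_ge p t r"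
proof (elim pval_geE)
  fix a b assume "t \<le> s" "\<not> p dvd b" "r = of_int (p^s * a) / of_int b"
  moreover have "p^s * a = p^t * (p^(s-t) * a)"
    using \<open>t \<le> s\<close> by (simp add: power_add[symmetric])
  ultimately show ?thesis by (metis pval_geI)
qed

lemma pval_ge_add:
  assumes "prime p" "pval_ge p s r" "pval_ge p s r'"
  shows "pval_ge p s (r + r')"
proof -
  obtain a b a' b' where ab: "\<not> p dvd b" "r = of_int (p^s * a) / of_int b"
    and ab': "\<not> p dvd b'" "r' = of_int (p^s * a') / of_int b'"
    using assms(2,3) by (meson pval_geE)
  have "b \<noteq> 0" "b' \<noteq> 0" using ab(1) ab'(1) by auto
  then have "r + r' = of_int (p^s * (a*b' + a'*b)) / of_int (b*b')"
    by (simp add: ab(2) ab'(2) field_simps)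
  moreover have "\<not> p dvd b * b'" using ab(1) ab'(1) assms(1) prime_dvd_mult_iff by blast
  ultimately show ?thesis by (metis pval_geI)
qed

lemma pval_ge_uminus: "pval_ge p s r \<Longrightarrow> pval_ge p s (- r)"
proof (elim pval_geE)
  fix a b assume "\<not> p dvd b" "r = of_int (p^s * a) / of_int b"
  then show ?thesis by (intro pval_geI[of p b _ _ "-a"]) auto
qed

lemma pval_ge_diff:
  "prime p \<Longrightarrow> pval_ge p s r \<Longrightarrow> pval_ge p s r' \<Longrightarrow> pval_ge p s (r - r')"
  using pval_ge_add[of p s r "- r'"] pval_ge_uminus by simp

lemma pval_ge_mult:
  assumes "prime p" "pval_ge p s r" "pval_ge p t r'"
  shows "pval_ge p (s + t) (r * r')"
proof -
  obtain a b a' b' where ab: "\<not> p dvd b" "r = of_int (p^s * a) / of_int b"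
    and ab': "\<not> p dvd b'" "r' = of_int (p^t * a') / of_int b'"
    using assms(2,3) by (meson pval_geE)
  have "r * r' = of_int (p^(s+t) * (a*a')) / of_int (b*b')"
    by (simp add: ab(2) ab'(2) power_add mult_ac)
  moreover have "\<not> p dvd b * b'" using ab(1) ab'(1) assms(1) prime_dvd_mult_iff by blast
  ultimately show ?thesis by (metis pval_geI)
qed

lemma pval_ge_divide:
  assumes "prime p" "pval_ge p (s + v) r" "\<not> p dvd m"
  shows "pval_ge p s (r / of_int (p^v * m))"
proof -
  obtain a b where ab: "\<not> p dvd b" "r = of_int (p^(s+v) * a) / of_int b"
    using assms(2) by (rule pval_geE)
  have "b \<noteq> 0" "m \<noteq> 0" "p \<noteq> 0" using ab(1) assms(1,3) by auto
  then have "r / of_int (p^v * m) = of_int (p^s * a) / of_int (b * m)"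
    by (simp add: ab(2) power_add field_simps)
  moreover have "\<not> p dvd b * m" using ab(1) assms(1,3) prime_dvd_mult_iff by blast
  ultimately show ?thesis by (metis pval_geI)
qed

lemma pval_ge_prod:
  assumes "prime p" "\<forall>i\<in>S. pval_ge p 0 (f i)"
  shows "pval_ge p 0 (\<Prod>i\<in>S. f i)"
  using assms(2) pval_ge_mult[OF assms(1), of 0 _ 0]
  by (induction S rule: infinite_finite_induct)
    (auto simp: assms(1) pval_ge_of_int[OF assms(1), of 1, simplified])

lemma pval_ge_mult_diff:
  assumes "prime p" "pval_ge p 0 r" "pval_ge p 0 s'" "pval_ge p m (r' - r)" "pval_ge p m (s' - s)"
  shows "pval_ge p m (r' * s' - r * s)"
proof -
  have "r' * s' - r * s = (r' - r) * s' + r * (s' - s)" by (simp add: algebra_simps)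
  with pval_ge_mult[OF assms(1,4,3)] pval_ge_mult[OF assms(1,2,5)] show ?thesis
    using pval_ge_add[OF assms(1)] by simp
qed

lemma pval_ge_prod_diff:
  assumes "prime p" "finite S"
    and "\<forall>i\<in>S. pval_ge p 0 (f i) \<and> pval_ge p 0 (g i) \<and> pval_ge p m (g i - f i)"
  shows "pval_ge p m ((\<Prod>i\<in>S. g i) - (\<Prod>i\<in>S. f i))"
  using assms(2,3)
proof (induction S rule: finite_induct)
  case (insert i S)
  then show ?case
    using pval_ge_mult_diff[OF assms(1)] pval_ge_prod[OF assms(1), of S g] by simp
qed (simp add: assms(1))

lemma pval_ge_0_iff_p_integral: "pval_ge p 0 r \<longleftrightarrow> p_integral p r"
proof -
  obtain u d where ud: "quotient_of r = (u, d)" by (cases "quotient_of r")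
  have r: "r = of_int u / of_int d" and "d > 0" and "coprime u d"
    using quotient_of_div[OF ud] quotient_of_denom_pos[OF ud] quotient_of_coprime[OF ud] by auto
  show ?thesis
  proof
    assume "pval_ge p 0 r"
    then obtain a b where ab: "\<not> p dvd b" "r = of_int (p^0 * a) / of_int b"
      by (rule pval_geE)
    moreover from ab(1) have "b \<noteq> 0" by auto
    ultimately have "of_int (a * d) = (of_int (u * b) :: rat)"
      using \<open>d > 0\<close> by (simp add: r field_simps)
    then have "a * d = u * b" by (rule of_int_eq_iff[THEN iffD1])
    then have "d dvd b"
      using \<open>coprime u d\<close> by (metis coprime_commute coprime_dvd_mult_right_iff dvd_triv_right)
    with ab(1) show "p_integral p r" unfolding p_integral_def ud by (auto dest: dvd_trans)
  next
    assume "p_integral p r"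
    then show "pval_ge p 0 r" using r ud unfolding p_integral_def by (intro pval_geI[of p d]) auto
  qed
qed

section \<open>Reduction of p-integral rationals into \<open>Z\<^sub>p\<close>\<close>

lemma pval_ge_of_int_imp_dvd:
  assumes "prime p" "pval_ge p k (of_int z)"
  shows "p^k dvd z"
proof -
  obtain a b where ab: "\<not> p dvd b" "of_int z = (of_int (p^k * a) / of_int b :: rat)"
    using assms(2) by (rule pval_geE)
  from ab(1) have "b \<noteq> 0" by auto
  with ab(2) have "of_int (z * b) = (of_int (p^k * a) :: rat)" by (simp add: field_simps)
  then have "p^k dvd z * b" by (metis dvd_triv_left of_int_eq_iff)
  moreover have "coprime (p^k) b" using prime_imp_coprime[OF assms(1) ab(1)] by simp
  ultimately show ?thesis using coprime_dvd_mult_left_iff by blast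
qed

lemma pval_ge_mod_diff: "prime p \<Longrightarrow> pval_ge p k (of_int z - of_int (z mod p^k))"
  by (rule pval_geI[of p 1 _ _ "z div p^k"])
    (auto simp: not_prime_unit minus_mod_eq_mult_div[symmetric] simp flip: of_int_diff)

lemma pval_ge_diff_of_int_if_cong:
  assumes "p_integral p r" "quotient_of r = (u, d)" "[y * d = u] (mod p^k)"
  shows "pval_ge p k (r - of_int y)"
proof -
  have d: "\<not> p dvd d" "d \<noteq> 0" using assms(1,2) unfolding p_integral_def by auto
  obtain t where "u - y * d = p^k * t"
    using assms(3) by (metis cong_iff_dvd_diff dvd_def dvd_diff_commute)
  moreover have "r - of_int y = of_int (u - y * d) / of_int d"
    using quotient_of_div[OF assms(2)] d(2) by (simp add: field_simps)
  ultimately show ?thesis using d(1) by (intro pval_geI[of p d]) auto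
qed

lemma prat_spec:
  assumes "prime p" "pval_ge p 0 r"
  shows "prat p r k \<in> {0..<p^k}" "pval_ge p k (r - of_int (prat p r k))"
proof -
  obtain u d where ud: "quotient_of r = (u, d)" by (cases "quotient_of r")
  have int: "p_integral p r" using assms pval_ge_0_iff_p_integral by blast
  then have "coprime d (p^k)"
    using ud prime_imp_coprime[OF assms(1)] unfolding p_integral_def by (simp add: coprime_commute)
  then obtain w where w: "[d * w = 1] (mod p^k)" using cong_solve_coprime_int by blast
  have "p^k > 0" using prime_gt_1_int[OF assms(1)] by simp
  have "[(u * w) mod p^k * d = u * (d * w)] (mod p^k)"
    by (simp add: cong_def mod_mult_right_eq ac_simps)
  also have "[u * (d * w) = u * 1] (mod p^k)" by (rule cong_mult[OF cong_refl w])
  finally have "\<exists>y. y \<in> {0..<p^k} \<and> [y * d = u] (mod p^k)"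
    using \<open>p^k > 0\<close> by (intro exI[of _ "(u * w) mod p^k"]) simp
  then have "prat p r k \<in> {0..<p^k} \<and> [prat p r k * d = u] (mod p^k)"
    unfolding prat_def ud fst_conv snd_conv by (rule someI_ex)
  then show "prat p r k \<in> {0..<p^k}" "pval_ge p k (r - of_int (prat p r k))"
    using pval_ge_diff_of_int_if_cong[OF int ud] by auto
qed

lemma prat_eqI:
  assumes "prime p" "pval_ge p 0 r" "y \<in> {0..<p^k}" "pval_ge p k (r - of_int y)"
  shows "prat p r k = y"
proof -
  have "pval_ge p k ((r - of_int y) - (r - of_int (prat p r k)))"
    using pval_ge_diff[OF assms(1,4) prat_spec(2)[OF assms(1,2)]] .
  then have "p^k dvd prat p r k - y" by (intro pval_ge_of_int_imp_dvd[OF assms(1)]) simp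
  then have "prat p r k mod p^k = y mod p^k" by (simp add: mod_eq_dvd_iff)
  with assms(3) prat_spec(1)[OF assms(1,2)] show ?thesis by simp
qed

lemma prat_eq_if_pval_ge_diff:
  assumes "prime p" "pval_ge p 0 r" "pval_ge p 0 r'" "pval_ge p k (r - r')"
  shows "prat p r k = prat p r' k"
  using pval_ge_add[OF assms(1,4) prat_spec(2)[OF assms(1,3)]]
  by (intro prat_eqI[OF assms(1,2) prat_spec(1)[OF assms(1,3)]]) simp

lemma prat_zero: "prime p \<Longrightarrow> prat p 0 k = 0"
  using prime_gt_1_int[of p] by (intro prat_eqI) auto

lemma prat_in_Zp:
  assumes "prime p" "pval_ge p 0 r" shows "prat p r \<in> Zp p"
  unfolding Zp_def
proof (intro CollectI allI conjI)
  fix k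
  let ?y = "prat p r (Suc k)"
  show "prat p r k \<in> {0..<p^k}" using prat_spec(1)[OF assms] .
  have "pval_ge p k (r - of_int ?y)"
    using pval_ge_mono[OF _ prat_spec(2)[OF assms]] by simp
  from pval_ge_add[OF assms(1) this pval_ge_mod_diff[OF assms(1), of k ?y]]
  have "pval_ge p k (r - of_int (?y mod p^k))" by simp
  moreover have "p^k > 0" using prime_gt_1_int[OF assms(1)] by simp
  ultimately show "?y mod p^k = prat p r k"
    by (intro prat_eqI[symmetric] assms) simp_all
qed

section \<open>Binomial coefficients\<close>

lemma multiplicity_less_self:
  fixes p x :: int
  assumes "prime p" "x > 0"
  shows "int (multiplicity p x) < x"
proof -
  let ?v = "multiplicity p x"
  have "p ^ ?v \<le> x" using multiplicity_dvd[of p x] assms(2) by (rule zdvd_imp_le)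
  moreover have "int ?v < 2 ^ ?v" by (induction ?v) auto
  moreover have "(2::int) ^ ?v \<le> p ^ ?v"
    using prime_ge_2_int[OF assms(1)] by (intro power_mono) auto
  ultimately show ?thesis by linarith
qed

lemma pval_ge_gbinomial_diff:
  assumes p: "prime p" and "pval_ge p 0 y" "pval_ge p 0 y'" "pval_ge p (t + fact j) (y' - y)"
  shows "pval_ge p t ((y' gchoose j) - (y gchoose j))"
proof -
  let ?v = "multiplicity p (fact j :: int)"
  obtain m where fact_j: "(fact j :: int) = p ^ ?v * m" "\<not> p dvd m"
    by (rule multiplicity_decompose'[of "fact j" p]) (use p not_prime_unit in auto)
  have "int ?v < fact j" using multiplicity_less_self[OF p] by simp
  then have "?v \<le> fact j" by (metis less_imp_le of_nat_fact of_nat_less_iff)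
  have "pval_ge p (t + fact j) ((\<Prod>i=0..<j. y' - of_nat i) - (\<Prod>i=0..<j. y - of_nat i))"
    using assms by (intro pval_ge_prod_diff) (simp_all add: pval_ge_diff)
  then have "pval_ge p ((t + (fact j - ?v)) + ?v)
      ((\<Prod>i=0..<j. y' - of_nat i) - (\<Prod>i=0..<j. y - of_nat i))"
    using \<open>?v \<le> fact j\<close> by simp
  from pval_ge_divide[OF p this fact_j(2)]
  have "pval_ge p (t + (fact j - ?v)) ((y' gchoose j) - (y gchoose j))"
    by (simp add: gbinomial_prod_rev diff_divide_distrib fact_j(1)[symmetric])
  then show ?thesis by (rule pval_ge_mono[rotated]) simp
qed

lemma pval_ge_gbinomial:
  assumes p: "prime p" and "pval_ge p 0 y"
  shows "pval_ge p 0 (y gchoose j)"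
proof -
  let ?z = "prat p y (fact j)"
  have "?z \<ge> 0" using prat_spec(1)[OF assms] by simp
  then have "of_int ?z gchoose j = (of_nat (nat ?z choose j) :: rat)"
    by (simp add: binomial_gbinomial)
  moreover have "pval_ge p (0 + fact j) (y - of_int ?z)" using prat_spec(2)[OF assms] by simp
  then have "pval_ge p 0 ((y gchoose j) - (of_int ?z gchoose j))"
    using assms by (intro pval_ge_gbinomial_diff) simp_all
  ultimately show ?thesis
    using pval_ge_add[OF p _ pval_ge_of_nat[OF p, of "nat ?z choose j"]] by fastforce
qed

lemma pval_ge_Qcoef:
  assumes p: "prime p" and "pval_ge p 0 \<mu>"
  shows "pval_ge p 0 (Qcoef n l \<mu> j a)"
proof -
  have "pval_ge p 0 (\<mu> - 1)" using pval_ge_diff[OF p assms(2) pval_ge_of_nat[OF p, of 1]] by simp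
  then have "pval_ge p 0 (\<mu> gchoose k)" "pval_ge p 0 ((\<mu> - 1) gchoose k)" for k
    using assms by (simp_all add: pval_ge_gbinomial)
  then show ?thesis
    unfolding Qcoef_def by (simp add: p pval_ge_prod pval_ge_mult[OF p, of 0 _ 0, simplified])
qed

lemma pval_ge_Qcoef_diff:
  assumes p: "prime p" and "pval_ge p 0 \<mu>" "pval_ge p 0 \<mu>'"
    and "pval_ge p (m + fact N) (\<mu>' - \<mu>)" and "\<forall>i. a i \<le> N"
  shows "pval_ge p m (Qcoef n l \<mu>' j a - Qcoef n l \<mu> j a)"
proof -
  have int: "pval_ge p 0 (\<nu> - 1)" "pval_ge p 0 (\<nu> gchoose k)" "pval_ge p 0 ((\<nu> - 1) gchoose k)"
    if "\<nu> \<in> {\<mu>, \<mu>'}" for \<nu> k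
    using that assms(2,3) pval_ge_diff[OF p _ pval_ge_of_nat[OF p, of 1]]
    by (auto intro!: pval_ge_gbinomial[OF p])
  have "pval_ge p (m + fact (a i)) (\<mu>' - \<mu>)" for i
    using assms(4,5) by (elim pval_ge_mono[rotated]) (simp add: fact_mono)
  then have diff: "pval_ge p m ((\<mu>' gchoose a i) - (\<mu> gchoose a i))"
      "pval_ge p m (((\<mu>' - 1) gchoose a i) - ((\<mu> - 1) gchoose a i))" for i
    using int assms(2,3) by (auto intro!: pval_ge_gbinomial_diff[OF p])
  have prod: "pval_ge p m ((\<Prod>i\<in>S. \<mu>' gchoose a i) - (\<Prod>i\<in>S. \<mu> gchoose a i))" if "finite S" for S
    using that int diff by (intro pval_ge_prod_diff[OF p]) auto
  show ?thesis
  proof (cases "Qcond n l j a")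
    case True
    have "pval_ge p m (((\<mu>' - 1) gchoose a j) * (\<Prod>i\<in>{1..n-1} - {j}. \<mu>' gchoose a i)
        - ((\<mu> - 1) gchoose a j) * (\<Prod>i\<in>{1..n-1} - {j}. \<mu> gchoose a i))"
      by (rule pval_ge_mult_diff[OF p]) (use int prod diff in \<open>auto intro: pval_ge_prod[OF p]\<close>)
    with prod[of "{1..n-1}"] True show ?thesis by (simp add: Qcoef_def)
  qed (simp add: Qcoef_def p)
qed

lemma Zp_cong_Suc: "f \<in> Zp p \<Longrightarrow> [f (Suc k) = f k] (mod p^k)"
  unfolding Zp_def cong_def by auto

lemma mod_pow_in_Zp:
  assumes "p > 0" "\<And>k. [g (Suc k) = g k] (mod p^k)"
  shows "(\<lambda>k. g k mod p^k) \<in> Zp p"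
  unfolding Zp_def
proof (intro CollectI allI conjI)
  fix k
  show "g k mod p^k \<in> {0..<p^k}" using assms(1) by simp
  have "g (Suc k) mod p ^ Suc k mod p^k = g (Suc k) mod p^k"
    by (simp add: mod_mod_cancel le_imp_power_dvd)
  then show "g (Suc k) mod p ^ Suc k mod p^k = g k mod p^k"
    using assms(2) unfolding cong_def by simp
qed

lemma Zp_mod_pow_eq:
  assumes "f \<in> Zp p" "k \<le> m"
  shows "f m mod p^k = f k"
  using assms(2)
proof (induction m rule: dec_induct)
  case base
  show ?case using assms(1) unfolding Zp_def by auto
next
  case (step m)
  then have "f (Suc m) mod p^k = f (Suc m) mod p^m mod p^k"
    by (simp add: mod_mod_cancel le_imp_power_dvd)
  with step assms(1) show ?case unfolding Zp_def by auto
qed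

lemma pmul_in_Zp: "p > 0 \<Longrightarrow> x \<in> Zp p \<Longrightarrow> y \<in> Zp p \<Longrightarrow> pmul p x y \<in> Zp p"
  unfolding pmul_def by (intro mod_pow_in_Zp cong_mult Zp_cong_Suc)

lemma ppow_in_Zp: "p > 0 \<Longrightarrow> x \<in> Zp p \<Longrightarrow> ppow p x e \<in> Zp p"
  unfolding ppow_def by (intro mod_pow_in_Zp cong_pow Zp_cong_Suc)

lemma pprod_in_Zp: "p > 0 \<Longrightarrow> \<forall>i\<in>S. f i \<in> Zp p \<Longrightarrow> pprod p f S \<in> Zp p"
  unfolding pprod_def by (intro mod_pow_in_Zp cong_prod) (auto intro: Zp_cong_Suc)

lemma pdist_le_if_levels_agree:
  assumes "p > 1" "\<forall>m\<le>k. u m = v m"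
  shows "pdist p u v \<le> inverse (real_of_int p ^ k)"
proof (cases "u = v")
  case False
  let ?L = "LEAST j. u (Suc j) \<noteq> v (Suc j)"
  obtain m where "u m \<noteq> v m" using False by blast
  moreover from this assms(2) obtain j where "m = Suc j" by (cases m) auto
  ultimately have L: "u (Suc ?L) \<noteq> v (Suc ?L)" by (metis (mono_tags, lifting) LeastI)
  have "k \<le> ?L"
  proof (rule ccontr)
    assume "\<not> k \<le> ?L"
    with assms(2) L show False by simp
  qed
  then have "real_of_int p ^ k \<le> real_of_int p ^ ?L"
    using assms(1) by (intro power_increasing) auto
  with assms(1) False show ?thesis by (simp add: pdist_def le_imp_inverse_le)
qed (use assms(1) in \<open>simp add: pdist_def\<close>)

lemma pdist_less_if_levels_agree:
  assumes "p > 1" "\<epsilon> > 0"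
  obtains k where "\<And>u v. \<forall>m\<le>k. u m = v m \<Longrightarrow> pdist p u v < \<epsilon>"
proof -
  obtain k where k: "inverse \<epsilon> < real_of_int p ^ k"
    using real_arch_pow[of "real_of_int p" "inverse \<epsilon>"] assms(1) by auto
  have "inverse (real_of_int p ^ k) < inverse (inverse \<epsilon>)"
    by (rule less_imp_inverse_less[OF k]) (use assms(2) in simp)
  then have "inverse (real_of_int p ^ k) < \<epsilon>" by simp
  with pdist_le_if_levels_agree[OF assms(1)] show ?thesis
    by (intro that) (rule le_less_trans)
qed

text \<open>If the terms \<open>f a\<close> vanish at level m outside the finite set \<open>B m\<close>, this is the
  residue modulo \<open>p\<^sup>m\<close> of the sum of all terms.\<close>

definition levelwise_sum :: "int \<Rightarrow> (nat \<Rightarrow> 'a set) \<Rightarrow> ('a \<Rightarrow> nat \<Rightarrow> int) \<Rightarrow> nat \<Rightarrow> int" where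
  "levelwise_sum p B f = (\<lambda>m. (\<Sum>a\<in>B m. f a m) mod p^m)"

lemma psum_eq_levelwise_sum:
  assumes "finite A" "B m \<subseteq> A" "\<forall>a\<in>A - B m. f a m = 0"
  shows "psum p f A m = levelwise_sum p B f m"
  unfolding psum_def levelwise_sum_def
  using sum.mono_neutral_right[OF assms(1,2), of "\<lambda>a. f a m"] assms(3) by simp

lemma levelwise_sum_in_Zp:
  assumes "p > 0" "\<forall>a\<in>I. f a \<in> Zp p" "mono B" "\<forall>m. finite (B m) \<and> B m \<subseteq> I"
    and "\<forall>m. \<forall>a\<in>I - B m. f a m = 0"
  shows "levelwise_sum p B f \<in> Zp p"
  unfolding levelwise_sum_def
proof (rule mod_pow_in_Zp[OF assms(1)])
  fix k
  have "B k \<subseteq> B (Suc k)" using monoD[OF assms(3), of k "Suc k"] by simp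
  have "B (Suc k) \<subseteq> I" "finite (B (Suc k))" using assms(4) by auto
  have "[(\<Sum>a\<in>B (Suc k). f a (Suc k)) = (\<Sum>a\<in>B (Suc k). f a k)] (mod p^k)"
    using \<open>B (Suc k) \<subseteq> I\<close> assms(2) by (intro cong_sum Zp_cong_Suc) auto
  also have "(\<Sum>a\<in>B (Suc k). f a k) = (\<Sum>a\<in>B k. f a k)"
    using \<open>B k \<subseteq> B (Suc k)\<close> \<open>B (Suc k) \<subseteq> I\<close> \<open>finite (B (Suc k))\<close> assms(5)
    by (intro sum.mono_neutral_right) auto
  finally show "[(\<Sum>a\<in>B (Suc k). f a (Suc k)) = (\<Sum>a\<in>B k. f a k)] (mod p^k)" .
qed

lemma unif_series_conv_levelwise_sum:
  assumes "p > 1" "mono B" "\<forall>m. finite (B m) \<and> B m \<subseteq> I"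
    and "\<forall>x\<in>D. \<forall>m. \<forall>a\<in>I - B m. T a x m = 0"
  shows "unif_series_conv p I T D (\<lambda>x. levelwise_sum p B (\<lambda>a. T a x))"
  unfolding unif_series_conv_def
proof (intro allI impI)
  fix \<epsilon> :: real assume "\<epsilon> > 0"
  then obtain k where k: "\<And>u v. \<forall>m\<le>k. u m = v m \<Longrightarrow> pdist p u v < \<epsilon>"
    using pdist_less_if_levels_agree[OF assms(1)] by blast
  have "pdist p (psum p (\<lambda>a. T a x) A) (levelwise_sum p B (\<lambda>a. T a x)) < \<epsilon>"
    if "finite A" "B k \<subseteq> A" "A \<subseteq> I" "x \<in> D" for A x
  proof (rule k, intro allI impI)
    fix m assume "m \<le> k"
    then have "B m \<subseteq> A" using that(2) monoD[OF assms(2)] by blast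
    with that assms(4) show "psum p (\<lambda>a. T a x) A m = levelwise_sum p B (\<lambda>a. T a x) m"
      by (intro psum_eq_levelwise_sum) auto
  qed
  then show "\<exists>A0. finite A0 \<and> A0 \<subseteq> I \<and> (\<forall>A. finite A \<and> A0 \<subseteq> A \<and> A \<subseteq> I \<longrightarrow>
      (\<forall>x\<in>D. pdist p (psum p (\<lambda>a. T a x) A) (levelwise_sum p B (\<lambda>a. T a x)) < \<epsilon>))"
    using assms(3) by (intro exI[of _ "B k"]) auto
qed

lemma uniform_limit_levelwise_sum:
  assumes "p > 1" "mono B" "\<forall>s. finite (J s)"
    and "\<forall>s. \<forall>x\<in>D. \<forall>m. \<forall>a\<in>J s - B m. T' s a x m = 0"
    and "\<forall>k. eventually (\<lambda>s. B k \<subseteq> J s \<and> (\<forall>m\<le>k. \<forall>a\<in>B m. \<forall>x\<in>D. T' s a x m = T a x m))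
               sequentially"
    and "\<epsilon> > 0"
  shows "eventually (\<lambda>s. \<forall>x\<in>D.
           pdist p (psum p (\<lambda>a. T' s a x) (J s)) (levelwise_sum p B (\<lambda>a. T a x)) < \<epsilon>) sequentially"
proof -
  obtain k where k: "\<And>u v. \<forall>m\<le>k. u m = v m \<Longrightarrow> pdist p u v < \<epsilon>"
    using pdist_less_if_levels_agree[OF assms(1,6)] by blast
  show ?thesis
  proof (rule eventually_mono[OF assms(5)[rule_format, of k]], intro ballI k allI impI)
    fix s x m
    assume s: "B k \<subseteq> J s \<and> (\<forall>m\<le>k. \<forall>a\<in>B m. \<forall>x\<in>D. T' s a x m = T a x m)"
      and "x \<in> D" "m \<le> k"
    then have "B m \<subseteq> J s" using monoD[OF assms(2)] by blast
    with assms(3,4) \<open>x \<in> D\<close>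
    have "psum p (\<lambda>a. T' s a x) (J s) m = levelwise_sum p B (\<lambda>a. T' s a x) m"
      by (intro psum_eq_levelwise_sum) auto
    also have "\<dots> = levelwise_sum p B (\<lambda>a. T a x) m"
      using s \<open>x \<in> D\<close> \<open>m \<le> k\<close> unfolding levelwise_sum_def
      by (auto intro!: arg_cong2[where f="(mod)"] sum.cong)
    finally show "psum p (\<lambda>a. T' s a x) (J s) m = levelwise_sum p B (\<lambda>a. T a x) m" .
  qed
qed

section \<open>The support of \<open>Q\<^sub>j\<close> modulo \<open>p\<^sup>m\<close>\<close>

definition Qdeg :: "nat \<Rightarrow> nat \<Rightarrow> nat \<Rightarrow> (nat \<Rightarrow> nat) \<Rightarrow> nat" where
  "Qdeg n l j a = (\<Sum>i\<in>{2..n-1}. Qexp n l j a i)"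

text \<open>The multi-indices whose term of \<open>Q\<^sub>j\<close> can be nonzero modulo \<open>p\<^sup>m\<close> on the polydisc
  (see \<open>Qterm_vanishes\<close>).\<close>

definition Qsupp :: "nat \<Rightarrow> nat \<Rightarrow> nat \<Rightarrow> nat \<Rightarrow> (nat \<Rightarrow> nat) set" where
  "Qsupp n l j m = {a \<in> Idx n. Qcond n l j a \<and> Qdeg n l j a < m}"

lemma Idx_le_Qdeg:
  assumes "1 \<le> l" "2 * l < n" "a \<in> Idx n" "Qcond n l j a"
  shows "a i \<le> Qdeg n l j a + l"
proof -
  define K where "K = n - 2*l"
  have K: "1 \<le> K" "K + 1 \<le> n - 1" using assms(1,2) unfolding K_def by auto
  have le_deg: "Qexp n l j a i' \<le> Qdeg n l j a" if "i' \<in> {2..n-1}" for i'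
    unfolding Qdeg_def using that by (intro member_le_sum) auto
  have "(\<Sum>i'=K+1..n-1. a i') \<le> (\<Sum>i'=K+1..n-1. Qexp n l j a i')"
    by (intro sum_mono) (auto simp: Qexp_def K_def)
  also have "\<dots> \<le> Qdeg n l j a"
    unfolding Qdeg_def by (rule sum_mono2) (use K in auto)
  finally have tail: "(\<Sum>i'=K+1..n-1. a i') \<le> Qdeg n l j a" .
  consider "i = 0 \<or> n - 1 < i" | "1 \<le> i \<and> i < K" | "i = K" | "K < i \<and> i \<le> n - 1"
    by linarith
  then show ?thesis
  proof cases
    case 1
    then show ?thesis using assms(3) unfolding Idx_def by auto
  next
    case 2
    then have "a i \<le> Qexp n l j a (i + 1)" by (simp add: Qexp_def K_def)
    also have "\<dots> \<le> Qdeg n l j a" using 2 K by (intro le_deg) auto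
    finally show ?thesis by simp
  next
    case 3
    have "a i \<le> (\<Sum>i'=1..K. a i')" using 3 K by (intro member_le_sum) auto
    also have "\<dots> \<le> (\<Sum>i'=K+1..n-1. a i') + l"
      using assms(4) unfolding Qcond_def K_def by simp
    finally show ?thesis using tail by simp
  next
    case 4
    then have "a i \<le> Qexp n l j a i" by (simp add: Qexp_def K_def)
    also have "\<dots> \<le> Qdeg n l j a" using 4 K by (intro le_deg) auto
    finally show ?thesis by simp
  qed
qed

lemma Qsupp_less:
  assumes "1 \<le> l" "2 * l < n" "a \<in> Qsupp n l j m"
  shows "a i < m + l"
  using Idx_le_Qdeg[OF assms(1,2), of a j i] assms(3) unfolding Qsupp_def by fastforce

lemma Qsupp_subset_IdxB:
  assumes "1 \<le> l" "2 * l < n" "m + l \<le> M"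
  shows "Qsupp n l j m \<subseteq> IdxB n M"
proof
  fix a assume a: "a \<in> Qsupp n l j m"
  then have "a i \<le> M" for i using Qsupp_less[OF assms(1,2) a, of i] assms(3) by simp
  with a show "a \<in> IdxB n M" unfolding IdxB_def Qsupp_def by simp
qed

lemma finite_IdxB: "finite (IdxB n M)"
proof (rule finite_subset)
  show "IdxB n M \<subseteq> {a. (\<forall>i. i \<notin> {1..n-1} \<longrightarrow> a i = 0) \<and> (\<forall>i. a i \<in> {0..M})}"
    unfolding IdxB_def Idx_def by auto
  show "finite \<dots>"
    by (rule finite_subset[OF _ finite_set_of_finite_funs[of "{1..n-1}" "{0..M}" 0]]) auto
qed

lemma finite_Qsupp: "1 \<le> l \<Longrightarrow> 2 * l < n \<Longrightarrow> finite (Qsupp n l j m)"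
  by (rule finite_subset[OF Qsupp_subset_IdxB[OF _ _ order_refl] finite_IdxB])

lemma mono_Qsupp: "mono (Qsupp n l j)"
  unfolding Qsupp_def by (intro monoI) auto

lemma Zp_dvd_if_pabs_less_1:
  assumes "prime p" "y \<in> Zp p" "pabs p y < 1"
  shows "p dvd y m"
proof (cases m)
  case 0
  have "y 0 \<in> {0..<p^0}" using assms(2) unfolding Zp_def by blast
  then have "y 0 = 0" by simp
  with 0 show ?thesis by simp
next
  case (Suc m')
  have "y 1 = 0"
  proof (rule ccontr)
    assume "y 1 \<noteq> 0"
    then have "y \<noteq> pint p 0" "(LEAST k. y (Suc k) \<noteq> pint p 0 (Suc k)) = 0"
      unfolding pint_def by (auto intro: Least_eq_0)
    then show False using assms(3) unfolding pabs_def pdist_def by simp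
  qed
  with Suc show ?thesis using Zp_mod_pow_eq[OF assms(2), of 1 m] by (simp add: dvd_eq_mod_eq_0)
qed

lemma Qterm_vanishes:
  assumes "prime p" "x \<in> Dpoly p n" "a \<in> Idx n - Qsupp n l j m"
  shows "Qterm p n l \<mu> j x a m = 0"
proof -
  from assms(3) consider "\<not> Qcond n l j a" | "m \<le> Qdeg n l j a"
    unfolding Qsupp_def by fastforce
  then show ?thesis
  proof cases
    case 1
    then show ?thesis unfolding Qterm_def pmul_def Qcoef_def by (simp add: prat_zero assms(1))
  next
    case 2
    have "p dvd x i m" if "i \<in> {2..n-1}" for i
      using assms(2) that unfolding Dpoly_def by (auto intro: Zp_dvd_if_pabs_less_1[OF assms(1)])
    then have "(\<Prod>i\<in>{2..n-1}. p ^ Qexp n l j a i) dvd (\<Prod>i\<in>{2..n-1}. x i m ^ Qexp n l j a i)"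
      by (intro prod_dvd_prod dvd_power_same)
    then have "p^m dvd (\<Prod>i\<in>{2..n-1}. x i m ^ Qexp n l j a i)"
      using le_imp_power_dvd[OF 2] unfolding Qdeg_def power_sum
      by (rule dvd_trans[rotated])
    then show ?thesis
      unfolding Qterm_def pmul_def pprod_def ppow_def
      by (simp add: mod_prod_eq mod_mult_right_eq[symmetric])
  qed
qed

lemma Qterm_in_Zp:
  assumes "prime p" "x \<in> Dpoly p n" "pval_ge p 0 (Qcoef n l \<mu> j a)"
  shows "Qterm p n l \<mu> j x a \<in> Zp p"
proof -
  have "p > 0" using prime_gt_0_int[OF assms(1)] .
  with assms show ?thesis
    unfolding Qterm_def Dpoly_def
    by (intro pmul_in_Zp prat_in_Zp pprod_in_Zp ballI ppow_in_Zp) auto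
qed

lemma Qseries_converges:
  fixes j :: nat
  assumes p: "prime p" and l: "1 \<le> l" "2 * l < n" and "pval_ge p 0 \<mu>"
  defines "F \<equiv> \<lambda>x. levelwise_sum p (Qsupp n l j) (\<lambda>a. Qterm p n l \<mu> j x a)"
  shows "\<forall>x\<in>Dpoly p n. F x \<in> Zp p"
    and "unif_series_conv p (Idx n) (\<lambda>a x. Qterm p n l \<mu> j x a) (Dpoly p n) F"
proof -
  have supp: "\<forall>m. finite (Qsupp n l j m) \<and> Qsupp n l j m \<subseteq> Idx n"
    using finite_Qsupp[OF l] unfolding Qsupp_def by auto
  have vanish: "\<forall>x\<in>Dpoly p n. \<forall>m. \<forall>a\<in>Idx n - Qsupp n l j m. Qterm p n l \<mu> j x a m = 0"
    using Qterm_vanishes[OF p] by blast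
  show "\<forall>x\<in>Dpoly p n. F x \<in> Zp p"
    unfolding F_def using vanish Qterm_in_Zp[OF p] pval_ge_Qcoef[OF p assms(4)]
    by (intro ballI levelwise_sum_in_Zp[OF prime_gt_0_int[OF p] _ mono_Qsupp supp]) auto
  show "unif_series_conv p (Idx n) (\<lambda>a x. Qterm p n l \<mu> j x a) (Dpoly p n) F"
    unfolding F_def
    by (rule unif_series_conv_levelwise_sum[OF prime_gt_1_int[OF p] mono_Qsupp supp vanish])
qed

section \<open>The truncations \<open>Q\<^sup>l\<^sup>,\<^sup>s\<close>\<close>

definition halfpow :: "int \<Rightarrow> nat \<Rightarrow> nat" where
  "halfpow p s = nat ((p^s - 1) div 2)"

context
  fixes p :: int
  assumes p: "prime p" and odd: "odd p"
begin

lemma not_dvd_two: "\<not> p dvd 2"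
  using odd prime_ge_2_int[OF p] zdvd_imp_le[of p 2] by fastforce

lemma halfpow_ge: "s \<le> halfpow p s"
proof -
  have "p \<ge> 3" using prime_ge_2_int[OF p] odd by presburger
  have "(3::int)^s \<ge> 2 * int s + 1" by (induction s) auto
  also have "(3::int)^s \<le> p^s" using \<open>p \<ge> 3\<close> by (intro power_mono) auto
  finally show ?thesis unfolding halfpow_def by simp
qed

lemma pval_ge_halfpow_diff: "pval_ge p s (of_nat (halfpow p s) - (-1/2 :: rat))"
proof (rule pval_geI[OF not_dvd_two])
  have "odd (p^s)" using odd by simp
  then obtain q where q: "p^s = 2 * q + 1" by (rule oddE)
  moreover have "q \<ge> 0" using q zero_less_power[OF prime_gt_0_int[OF p], of s] by linarith
  ultimately show "of_nat (halfpow p s) - (-1/2) = (of_int (p^s * 1) / of_int 2 :: rat)"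
    unfolding halfpow_def by (simp add: field_simps)
qed

lemma pval_ge_minus_half: "pval_ge p 0 (-1/2 :: rat)"
  by (rule pval_geI[OF not_dvd_two, where a = "-1"]) simp

lemma Qterm_halfpow_eq:
  assumes "1 \<le> l" "2 * l < n" "a \<in> Qsupp n l j m" "m + fact (m + l) \<le> s"
  shows "Qterm p n l (of_nat (halfpow p s)) j x a m = Qterm p n l (-1/2) j x a m"
proof -
  have "pval_ge p (m + fact (m + l)) (of_nat (halfpow p s) - (-1/2 :: rat))"
    using assms(4) by (intro pval_ge_mono[OF _ pval_ge_halfpow_diff])
  then have "pval_ge p m (Qcoef n l (of_nat (halfpow p s)) j a - Qcoef n l (-1/2) j a)"
    using Qsupp_less[OF assms(1-3)] pval_ge_minus_half
    by (intro pval_ge_Qcoef_diff[OF p]) (auto simp: p less_imp_le)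
  then have "prat p (Qcoef n l (of_nat (halfpow p s)) j a) m = prat p (Qcoef n l (-1/2) j a) m"
    using pval_ge_minus_half
    by (intro prat_eq_if_pval_ge_diff[OF p] pval_ge_Qcoef[OF p]) (simp_all add: p)
  then show ?thesis unfolding Qterm_def pmul_def by simp
qed

lemma Qtruncations_converge:
  assumes "1 \<le> l" "2 * l < n" "\<epsilon> > 0"
  shows "eventually (\<lambda>s. \<forall>x\<in>Dpoly p n.
      pdist p (psum p (\<lambda>a. Qterm p n l (of_nat (halfpow p s)) j x a) (IdxB n (halfpow p s)))
        (levelwise_sum p (Qsupp n l j) (\<lambda>a. Qterm p n l (-1/2) j x a)) < \<epsilon>) sequentially"
proof (rule uniform_limit_levelwise_sum[OF prime_gt_1_int[OF p] mono_Qsupp _ _ _ assms(3)])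
  show "\<forall>s. finite (IdxB n (halfpow p s))" by (simp add: finite_IdxB)
  show "\<forall>s. \<forall>x\<in>Dpoly p n. \<forall>m. \<forall>a\<in>IdxB n (halfpow p s) - Qsupp n l j m.
      Qterm p n l (of_nat (halfpow p s)) j x a m = 0"
    using Qterm_vanishes[OF p] unfolding IdxB_def by auto
  show "\<forall>k. eventually (\<lambda>s. Qsupp n l j k \<subseteq> IdxB n (halfpow p s) \<and>
      (\<forall>m\<le>k. \<forall>a\<in>Qsupp n l j m. \<forall>x\<in>Dpoly p n.
        Qterm p n l (of_nat (halfpow p s)) j x a m = Qterm p n l (-1/2) j x a m)) sequentially"
  proof (intro allI eventually_sequentiallyI conjI ballI allI impI)
    fix k s assume s: "k + fact (k + l) \<le> s"
    have "k + l \<le> halfpow p s"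
      using halfpow_ge[of s] fact_ge_self[of "k + l"] s by linarith
    then show "Qsupp n l j k \<subseteq> IdxB n (halfpow p s)" by (rule Qsupp_subset_IdxB[OF assms(1,2)])
    fix m a x assume "m \<le> k" "a \<in> Qsupp n l j m"
    moreover from \<open>m \<le> k\<close> have "fact (m + l) \<le> (fact (k + l) :: nat)" by (intro fact_mono) simp
    with \<open>m \<le> k\<close> s have "m + fact (m + l) \<le> s" by linarith
    ultimately show "Qterm p n l (of_nat (halfpow p s)) j x a m = Qterm p n l (-1/2) j x a m"
      by (intro Qterm_halfpow_eq assms(1,2))
  qed
qed

end

theorem proposition10p4:
  fixes p :: int and g l n :: nat
  assumes "prime p" and "odd p" and "g \<ge> 1" and "n = 2*g + 1" and "p > int n"
    and "1 \<le> l" and "l \<le> g"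
  shows "(\<forall>j\<in>{1..n}. \<forall>a\<in>Idx n. p_integral p (Qcoef n l (-1/2) j a))
    \<and> (\<forall>j\<in>{1..n}. \<exists>F.
         (\<forall>x\<in>Dpoly p n. F x \<in> Zp p)
       \<and> unif_series_conv p (Idx n) (\<lambda>a x. Qterm p n l (-1/2) j x a) (Dpoly p n) F
       \<and> (\<forall>\<epsilon>>0. \<exists>S. \<forall>s\<ge>S. s \<ge> 1 \<longrightarrow> (\<forall>x\<in>Dpoly p n.
            pdist p (psum p (Qterm p n l (of_nat (nat ((p^s - 1) div 2))) j x)
                       (IdxB n (nat ((p^s - 1) div 2))))
                    (F x) < \<epsilon>)))"
proof -
  note p = assms(1) and odd = assms(2)
  have l: "1 \<le> l" "2 * l < n" using assms(4,6,7) by auto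
  note minus_half = pval_ge_minus_half[OF p odd]
  have "\<exists>F. (\<forall>x\<in>Dpoly p n. F x \<in> Zp p)
       \<and> unif_series_conv p (Idx n) (\<lambda>a x. Qterm p n l (-1/2) j x a) (Dpoly p n) F
       \<and> (\<forall>\<epsilon>>0. \<exists>S. \<forall>s\<ge>S. s \<ge> 1 \<longrightarrow> (\<forall>x\<in>Dpoly p n.
            pdist p (psum p (Qterm p n l (of_nat (halfpow p s)) j x) (IdxB n (halfpow p s)))
                    (F x) < \<epsilon>))" for j
    using Qseries_converges[OF p l minus_half, of j] Qtruncations_converge[OF p odd l, of _ j]
    unfolding eventually_sequentially
    by (intro exI[of _ "\<lambda>x. levelwise_sum p (Qsupp n l j) (\<lambda>a. Qterm p n l (-1/2) j x a)"] conjI)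
      blast+
  moreover have "p_integral p (Qcoef n l (-1/2) j a)" for j a
    using pval_ge_Qcoef[OF p minus_half] pval_ge_0_iff_p_integral by blast
  ultimately show ?thesis unfolding halfpow_def by blast
qed

end
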